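(* Let $(M,g,J_{TM})$ be a para-Hermitian manifold and $E=E_+\oplus E_-$ a para-holomorphic algebroid over $M$ with anchor $\rho$. Then $E$ is exact if and only if both sequences $$0\to T^{(0,1)}M\xrightarrow{a_-^*}E_+\xrightarrow{a_+}T^+M\to0,\qquad 0\to T^{(1,0)}M\xrightarrow{a_+^*}E_-\xrightarrow{a_-}T^-M\to0$$ are exact.
   Context: A Courant algebroid $(E,\rho,\langle\cdot,\cdot\rangle,[\cdot,\cdot])$ over $M$ is a vector bundle with a non-degenerate symmetric pairing, a skew-symmetric bracket and an anchor $\rho:E\to TM$ satisfying the usual axioms; $\rho^*:T^*M\to E$ is given by $\langle\rho^*\xi,e\rangle=\xi(\rho e)$, and $E$ is exact if $0\to T^*M\xrightarrow{\rho^*}E\xrightarrow{\rho}TM\to0$ is exact. A para-Hermitian algebroid is a Courant algebroid with $J\in\Gamma(\mathrm{End}E)$, $J^2=\mathrm{Id}$, equal-rank $\pm1$-eigenbundles $E_\pm$, $\langle J\cdot,J\cdot\rangle=-\langle\cdot,\cdot\rangle$, and $\Gamma(E_\pm)$ both closed under the bracket. A para-Hermitian manifold $(M,g,J_{TM})$ has split-signature $g$, $J_{TM}^2=\mathrm{Id}$ with equal-rank integrable eigenbundles $T^\pm M$, and $g(J_{TM}\cdot,J_{TM}\cdot)=-g$. A para-holomorphic algebroid is a para-Hermitian algebroid over a para-Hermitian manifold with $\rho\circ J=J_{TM}\circ\rho$. $T^{(1,0)}M\subset T^*M$ is the annihilator of $T^-M$ and $T^{(0,1)}M$ the annihilator of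 $T^+M$. With $\pi_{E_\pm}$ the projections, $a_\pm=\rho|_{E_\pm}$ (which in the para-holomorphic case takes values in $T^\pm M$), and $a_\pm^*:T^*M\to E$ is defined by $\langle a_\pm^*\xi,e\rangle=\xi(\rho(\pi_{E_\pm}e))$ (taking values in $E_\mp$), restricted to the indicated subbundles of $T^*M$. *)

theory Defs
  imports "HOL-Analysis.Analysis"
begin

text \<open>For a point p of M, the fibre E_p is modelled by a finite-dimensional
real vector space 'e, the tangent space T_pM by 't, and the cotangent space
T^*_pM by the linear functionals on 't.\<close>

definition sym_nondeg :: "('a::real_vector \<Rightarrow> 'a \<Rightarrow> real) \<Rightarrow> bool" where
  "sym_nondeg B \<longleftrightarrow> bilinear B \<and> (\<forall>x y. B x y = B y x) \<and> (\<forall>x. (\<forall>y. B x y = 0) \<longrightarrow> x = 0)"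

definition split_signature :: "('a::euclidean_space \<Rightarrow> 'a \<Rightarrow> real) \<Rightarrow> bool" where
  "split_signature g \<longleftrightarrow> (\<exists>P N. subspace P \<and> subspace N \<and> dim P = dim N \<and>
      dim P + dim N = DIM('a) \<and>
      (\<forall>v\<in>P. v \<noteq> 0 \<longrightarrow> g v v > 0) \<and> (\<forall>v\<in>N. v \<noteq> 0 \<longrightarrow> g v v < 0))"

definition plus_eig :: "('a::real_vector \<Rightarrow> 'a) \<Rightarrow> 'a set" where
  "plus_eig J = {v. J v = v}"

definition minus_eig :: "('a::real_vector \<Rightarrow> 'a) \<Rightarrow> 'a set" where
  "minus_eig J = {v. J v = - v}"

definition para_complex :: "('a::euclidean_space \<Rightarrow> 'a) \<Rightarrow> bool" where
  "para_complex J \<longleftrightarrow> linear J \<and> (\<forall>v. J (J v) = v) \<and> dim (plus_eig J) = dim (minus_eig J)"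

definition anti_compatible :: "('a \<Rightarrow> 'a \<Rightarrow> real) \<Rightarrow> ('a \<Rightarrow> 'a) \<Rightarrow> bool" where
  "anti_compatible B J \<longleftrightarrow> (\<forall>x y. B (J x) (J y) = - B x y)"

definition proj_plus :: "('a::real_vector \<Rightarrow> 'a) \<Rightarrow> 'a \<Rightarrow> 'a" where
  "proj_plus J e = (1/2) *\<^sub>R (e + J e)"

definition proj_minus :: "('a::real_vector \<Rightarrow> 'a) \<Rightarrow> 'a \<Rightarrow> 'a" where
  "proj_minus J e = (1/2) *\<^sub>R (e - J e)"

definition cotangent :: "('t::real_vector \<Rightarrow> real) set" where
  "cotangent = {\<xi>. linear \<xi>}"

definition T10 :: "('t::real_vector \<Rightarrow> 't) \<Rightarrow> ('t \<Rightarrow> real) set" where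
  "T10 JT = {\<xi>. linear \<xi> \<and> (\<forall>v\<in>minus_eig JT. \<xi> v = 0)}"

definition T01 :: "('t::real_vector \<Rightarrow> 't) \<Rightarrow> ('t \<Rightarrow> real) set" where
  "T01 JT = {\<xi>. linear \<xi> \<and> (\<forall>v\<in>plus_eig JT. \<xi> v = 0)}"

definition B_dual :: "('e \<Rightarrow> 'e \<Rightarrow> real) \<Rightarrow> ('e \<Rightarrow> real) \<Rightarrow> 'e" where
  "B_dual B f = (THE x. \<forall>e. B x e = f e)"

definition rho_star :: "('e \<Rightarrow> 'e \<Rightarrow> real) \<Rightarrow> ('e \<Rightarrow> 't) \<Rightarrow> ('t \<Rightarrow> real) \<Rightarrow> 'e" where
  "rho_star B \<rho> \<xi> = B_dual B (\<lambda>e. \<xi> (\<rho> e))"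

definition a_plus_star :: "('e::real_vector \<Rightarrow> 'e \<Rightarrow> real) \<Rightarrow> ('e \<Rightarrow> 't) \<Rightarrow> ('e \<Rightarrow> 'e) \<Rightarrow> ('t \<Rightarrow> real) \<Rightarrow> 'e" where
  "a_plus_star B \<rho> J \<xi> = B_dual B (\<lambda>e. \<xi> (\<rho> (proj_plus J e)))"

definition a_minus_star :: "('e::real_vector \<Rightarrow> 'e \<Rightarrow> real) \<Rightarrow> ('e \<Rightarrow> 't) \<Rightarrow> ('e \<Rightarrow> 'e) \<Rightarrow> ('t \<Rightarrow> real) \<Rightarrow> 'e" where
  "a_minus_star B \<rho> J \<xi> = B_dual B (\<lambda>e. \<xi> (\<rho> (proj_minus J e)))"

definition short_exact :: "'a set \<Rightarrow> ('a \<Rightarrow> 'b::zero) \<Rightarrow> 'b set \<Rightarrow> ('b \<Rightarrow> 'c::zero) \<Rightarrow> 'c set \<Rightarrow> bool" where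
  "short_exact A f X g C \<longleftrightarrow> inj_on f A \<and> f ` A = {x\<in>X. g x = 0} \<and> g ` X = C"

text \<open>Pointwise data of a para-holomorphic algebroid at a point: pairing B, anchor rho,
para-complex structure J on E; metric g and para-complex structure JT on TM.\<close>
definition para_holomorphic_fibre ::
  "('e::euclidean_space \<Rightarrow> 'e \<Rightarrow> real) \<Rightarrow> ('e \<Rightarrow> 't::euclidean_space) \<Rightarrow> ('e \<Rightarrow> 'e)
   \<Rightarrow> ('t \<Rightarrow> 't \<Rightarrow> real) \<Rightarrow> ('t \<Rightarrow> 't) \<Rightarrow> bool" where
  "para_holomorphic_fibre B \<rho> J g JT \<longleftrightarrow>
     sym_nondeg B \<and> linear \<rho> \<and> para_complex J \<and> anti_compatible B J \<and>
     sym_nondeg g \<and> split_signature g \<and> para_complex JT \<and> anti_compatible g JT \<and>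
     (\<forall>e. \<rho> (J e) = JT (\<rho> e))"

end

theory Submission
  imports Defs "HOL-Library.Function_Algebras"
begin

(* At every point the three spaces split along the para-complex structures:
   T*M = T^(0,1) + T^(1,0), E = E_+ + E_- and TM = T^+ + T^-.  Since rho intertwines J with
   J_TM and J is anti-orthogonal, rho maps E_+- into T^+- and rho* maps T^(0,1) into E_+ and
   T^(1,0) into E_-, where it coincides with a_-* and a_+* respectively.  Hence
   0 -> T*M -> E -> TM -> 0 is the direct sum of the two sequences of the theorem, and a
   direct sum of sequences is exact exactly when both summands are. *)

definition internal_direct_sum :: "'a::monoid_add set \<Rightarrow> 'a set \<Rightarrow> 'a set \<Rightarrow> bool" where
  "internal_direct_sum S S1 S2 \<longleftrightarrow> 0 \<in> S1 \<and> 0 \<in> S2 \<and>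
     S = {x1 + x2 |x1 x2. x1 \<in> S1 \<and> x2 \<in> S2} \<and>
     (\<forall>x1\<in>S1. \<forall>x2\<in>S2. \<forall>y1\<in>S1. \<forall>y2\<in>S2. x1 + x2 = y1 + y2 \<longrightarrow> x1 = y1 \<and> x2 = y2)"

lemma internal_direct_sumI:
  fixes S1 S2 :: "'a::ab_group_add set"
  assumes "0 \<in> S1" "0 \<in> S2"
    and diff1: "\<And>x y. x \<in> S1 \<Longrightarrow> y \<in> S1 \<Longrightarrow> x - y \<in> S1"
    and diff2: "\<And>x y. x \<in> S2 \<Longrightarrow> y \<in> S2 \<Longrightarrow> x - y \<in> S2"
    and inter: "S1 \<inter> S2 \<subseteq> {0}"
    and "S = {x1 + x2 |x1 x2. x1 \<in> S1 \<and> x2 \<in> S2}"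
  shows "internal_direct_sum S S1 S2"
  unfolding internal_direct_sum_def
proof (intro conjI ballI impI)
  fix x1 x2 y1 y2 assume "x1 \<in> S1" "x2 \<in> S2" "y1 \<in> S1" "y2 \<in> S2" "x1 + x2 = y1 + y2"
  then have "x1 - y1 \<in> S1 \<inter> S2"
    using diff1 diff2 by (metis IntI add_diff_cancel_left' add_diff_cancel_right' diff_diff_eq2)
  then show "x1 = y1" "x2 = y2" using inter \<open>x1 + x2 = y1 + y2\<close> by (auto simp: algebra_simps)
qed (use assms in auto)

lemma internal_direct_sum_commute:
  fixes S :: "'a::comm_monoid_add set"
  shows "internal_direct_sum S S1 S2 \<Longrightarrow> internal_direct_sum S S2 S1"
  unfolding internal_direct_sum_def by (auto, (metis add.commute)+)

lemma internal_direct_sum_zero: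
  "internal_direct_sum S S1 S2 \<Longrightarrow> 0 \<in> S1"
  "internal_direct_sum S S1 S2 \<Longrightarrow> 0 \<in> S2"
  unfolding internal_direct_sum_def by blast+

lemma internal_direct_sum_add:
  "internal_direct_sum S S1 S2 \<Longrightarrow> x1 \<in> S1 \<Longrightarrow> x2 \<in> S2 \<Longrightarrow> x1 + x2 \<in> S"
  unfolding internal_direct_sum_def by blast

lemma internal_direct_sum_subset:
  fixes S :: "'a::monoid_add set"
  assumes "internal_direct_sum S S1 S2"
  shows "S1 \<subseteq> S"
proof
  fix x assume "x \<in> S1"
  then show "x \<in> S"
    using internal_direct_sum_add[OF assms _ internal_direct_sum_zero(2)[OF assms]] by simp
qed

lemma internal_direct_sum_decompose:
  assumes "internal_direct_sum S S1 S2" "x \<in> S"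
  obtains x1 x2 where "x1 \<in> S1" "x2 \<in> S2" "x = x1 + x2"
  using assms unfolding internal_direct_sum_def by blast

lemma internal_direct_sum_unique:
  assumes "internal_direct_sum S S1 S2" "x1 + x2 = y1 + y2"
    and "x1 \<in> S1" "x2 \<in> S2" "y1 \<in> S1" "y2 \<in> S2"
  shows "x1 = y1" "x2 = y2"
  using assms unfolding internal_direct_sum_def by blast+

lemma internal_direct_sum_summand_eq:
  assumes "internal_direct_sum S S1 S2" "x = y1 + y2" "x \<in> S1" "y1 \<in> S1" "y2 \<in> S2"
  shows "x = y1"
  using internal_direct_sum_unique(1)[OF assms(1) _ assms(3) internal_direct_sum_zero(2)[OF assms(1)]
      assms(4,5)] assms(2)
  by simp

lemma short_exact_cong:
  assumes "\<And>a. a \<in> A \<Longrightarrow> f a = f' a"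
  shows "short_exact A f X g C \<longleftrightarrow> short_exact A f' X g C"
proof -
  have "inj_on f A \<longleftrightarrow> inj_on f' A" by (rule inj_on_cong) (rule assms)
  moreover have "f ` A = f' ` A" by (rule image_cong) (simp_all add: assms)
  ultimately show ?thesis unfolding short_exact_def by simp
qed

locale direct_sum_of_sequences =
  fixes f :: "'a::ab_group_add \<Rightarrow> 'b::ab_group_add" and g :: "'b \<Rightarrow> 'c::ab_group_add"
    and A A1 A2 X X1 X2 C C1 C2
  assumes A: "internal_direct_sum A A1 A2" and X: "internal_direct_sum X X1 X2"
    and C: "internal_direct_sum C C1 C2"
    and f_add: "\<And>a1 a2. a1 \<in> A1 \<Longrightarrow> a2 \<in> A2 \<Longrightarrow> f (a1 + a2) = f a1 + f a2"
    and g_add: "\<And>x1 x2. x1 \<in> X1 \<Longrightarrow> x2 \<in> X2 \<Longrightarrow> g (x1 + x2) = g x1 + g x2"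
    and f1: "f ` A1 \<subseteq> X1" and f2: "f ` A2 \<subseteq> X2"
    and g1: "g ` X1 \<subseteq> C1" and g2: "g ` X2 \<subseteq> C2"
begin

lemma swap: "direct_sum_of_sequences f g A A2 A1 X X2 X1 C C2 C1"
proof
  show "internal_direct_sum A A2 A1" "internal_direct_sum X X2 X1" "internal_direct_sum C C2 C1"
    using A X C by (simp_all add: internal_direct_sum_commute)
  show "f (a2 + a1) = f a2 + f a1" if "a2 \<in> A2" "a1 \<in> A1" for a1 a2
    using f_add[OF that(2,1)] by (simp add: add.commute)
  show "g (x2 + x1) = g x2 + g x1" if "x2 \<in> X2" "x1 \<in> X1" for x1 x2
    using g_add[OF that(2,1)] by (simp add: add.commute)
qed (fact f1 f2 g1 g2)+

lemma short_exact_direct_summand: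
  assumes "short_exact A f X g C"
  shows "short_exact A1 f X1 g C1"
proof -
  have inj: "inj_on f A" and ker: "f ` A = {x \<in> X. g x = 0}" and surj: "g ` X = C"
    using assms unfolding short_exact_def by blast+
  have ker1: "f ` A1 = {x \<in> X1. g x = 0}"
  proof (intro equalityI subsetI)
    fix x assume "x \<in> f ` A1"
    then obtain a where "a \<in> A1" "x = f a" by blast
    moreover have "f a \<in> f ` A" using \<open>a \<in> A1\<close> internal_direct_sum_subset[OF A] by blast
    ultimately show "x \<in> {x \<in> X1. g x = 0}" using f1 unfolding ker by blast
  next
    fix x assume x: "x \<in> {x \<in> X1. g x = 0}"
    have "x \<in> f ` A" unfolding ker using x internal_direct_sum_subset[OF X] by blast
    then obtain a where "a \<in> A" "x = f a" by blast
    moreover obtain a1 a2 where a: "a1 \<in> A1" "a2 \<in> A2" "a = a1 + a2"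
      using internal_direct_sum_decompose[OF A \<open>a \<in> A\<close>] .
    ultimately have "x = f a1 + f a2" using f_add[OF a(1,2)] by simp
    moreover have "x \<in> X1" "f a1 \<in> X1" "f a2 \<in> X2" using x a f1 f2 by blast+
    ultimately have "x = f a1" by (rule internal_direct_sum_summand_eq[OF X])
    then show "x \<in> f ` A1" using a by blast
  qed
  have surj1: "g ` X1 = C1"
  proof (intro equalityI subsetI)
    fix c assume c: "c \<in> C1"
    have "c \<in> g ` X" unfolding surj using c internal_direct_sum_subset[OF C] by blast
    then obtain x where "x \<in> X" "c = g x" by blast
    moreover obtain x1 x2 where xs: "x1 \<in> X1" "x2 \<in> X2" "x = x1 + x2"
      using internal_direct_sum_decompose[OF X \<open>x \<in> X\<close>] .
    ultimately have "c = g x1 + g x2" using g_add[OF xs(1,2)] by simp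
    moreover have "c \<in> C1" "g x1 \<in> C1" "g x2 \<in> C2" using c xs g1 g2 by blast+
    ultimately have "c = g x1" by (rule internal_direct_sum_summand_eq[OF C])
    then show "c \<in> g ` X1" using xs by blast
  qed (use g1 in blast)
  show ?thesis
    unfolding short_exact_def
    by (intro conjI inj_on_subset[OF inj internal_direct_sum_subset[OF A]] ker1 surj1)
qed

lemma inj_on_direct_sum:
  assumes "inj_on f A1" "inj_on f A2"
  shows "inj_on f A"
proof (rule inj_onI)
  fix a b assume "a \<in> A" "b \<in> A" "f a = f b"
  obtain a1 a2 where a: "a1 \<in> A1" "a2 \<in> A2" "a = a1 + a2"
    using internal_direct_sum_decompose[OF A \<open>a \<in> A\<close>] .
  obtain b1 b2 where b: "b1 \<in> A1" "b2 \<in> A2" "b = b1 + b2"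
    using internal_direct_sum_decompose[OF A \<open>b \<in> A\<close>] .
  have "f a1 + f a2 = f b1 + f b2"
    using \<open>f a = f b\<close> f_add[OF a(1,2)] f_add[OF b(1,2)] a(3) b(3) by simp
  moreover have "f a1 \<in> X1" "f a2 \<in> X2" "f b1 \<in> X1" "f b2 \<in> X2"
    using f1 f2 a b by blast+
  ultimately have "f a1 = f b1" "f a2 = f b2"
    by (fact internal_direct_sum_unique[OF X])+
  then have "a1 = b1" "a2 = b2"
    using inj_onD[OF assms(1) _ a(1) b(1)] inj_onD[OF assms(2) _ a(2) b(2)] by blast+
  then show "a = b" using a(3) b(3) by simp
qed

lemma short_exact_direct_sum:
  assumes "short_exact A1 f X1 g C1" "short_exact A2 f X2 g C2"
  shows "short_exact A f X g C"
proof -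
  have inj1: "inj_on f A1" and ker1: "f ` A1 = {x \<in> X1. g x = 0}" and surj1: "g ` X1 = C1"
    using assms(1) unfolding short_exact_def by blast+
  have inj2: "inj_on f A2" and ker2: "f ` A2 = {x \<in> X2. g x = 0}" and surj2: "g ` X2 = C2"
    using assms(2) unfolding short_exact_def by blast+
  have ker: "f ` A = {x \<in> X. g x = 0}"
  proof (intro equalityI subsetI)
    fix x assume "x \<in> f ` A"
    then obtain a where "a \<in> A" "x = f a" by blast
    obtain a1 a2 where a: "a1 \<in> A1" "a2 \<in> A2" "a = a1 + a2"
      using internal_direct_sum_decompose[OF A \<open>a \<in> A\<close>] .
    have "f a1 \<in> {x \<in> X1. g x = 0}" "f a2 \<in> {x \<in> X2. g x = 0}"
      unfolding ker1[symmetric] ker2[symmetric] using a by blast+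
    moreover have "x = f a1 + f a2" using \<open>x = f a\<close> a f_add by simp
    ultimately show "x \<in> {x \<in> X. g x = 0}"
      using g_add internal_direct_sum_add[OF X] by simp
  next
    fix x assume x: "x \<in> {x \<in> X. g x = 0}"
    then obtain x1 x2 where xs: "x1 \<in> X1" "x2 \<in> X2" "x = x1 + x2"
      using internal_direct_sum_decompose[OF X] by blast
    have "g x1 + g x2 = 0 + 0" using x xs g_add by simp
    moreover have "g x1 \<in> C1" "g x2 \<in> C2" using g1 g2 xs by blast+
    ultimately have "g x1 = 0" "g x2 = 0"
      by (fact internal_direct_sum_unique[OF C _ _ _ internal_direct_sum_zero[OF C]])+
    then have "x1 \<in> f ` A1" "x2 \<in> f ` A2" unfolding ker1 ker2 using xs by blast+
    then obtain a1 a2 where "a1 \<in> A1" "a2 \<in> A2" "x1 = f a1" "x2 = f a2" by blast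
    then show "x \<in> f ` A" using xs(3) f_add internal_direct_sum_add[OF A] by (metis image_eqI)
  qed
  have surj: "g ` X = C"
  proof (intro equalityI subsetI)
    fix c assume "c \<in> g ` X"
    then obtain x where "x \<in> X" "c = g x" by blast
    obtain x1 x2 where "x1 \<in> X1" "x2 \<in> X2" "x = x1 + x2"
      using internal_direct_sum_decompose[OF X \<open>x \<in> X\<close>] .
    moreover have "g x1 \<in> C1" "g x2 \<in> C2" using g1 g2 calculation by blast+
    ultimately show "c \<in> C"
      using \<open>c = g x\<close> g_add internal_direct_sum_add[OF C] by simp
  next
    fix c assume "c \<in> C"
    obtain c1 c2 where "c1 \<in> C1" "c2 \<in> C2" "c = c1 + c2"
      using internal_direct_sum_decompose[OF C \<open>c \<in> C\<close>] .
    moreover obtain x1 x2 where "x1 \<in> X1" "x2 \<in> X2" "c1 = g x1" "c2 = g x2"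
      using surj1 surj2 calculation by blast
    ultimately show "c \<in> g ` X" using g_add internal_direct_sum_add[OF X] by (metis image_eqI)
  qed
  show ?thesis
    unfolding short_exact_def by (intro conjI inj_on_direct_sum inj1 inj2 ker surj)
qed

theorem short_exact_iff:
  "short_exact A f X g C \<longleftrightarrow> short_exact A1 f X1 g C1 \<and> short_exact A2 f X2 g C2"
  using short_exact_direct_summand direct_sum_of_sequences.short_exact_direct_summand[OF swap]
    short_exact_direct_sum
  by blast

end

lemma proj_plus_add_proj_minus: "proj_plus J v + proj_minus J v = v"
  unfolding proj_plus_def proj_minus_def by (simp add: algebra_simps flip: scaleR_add_left)

lemma linear_proj_split: "linear \<xi> \<Longrightarrow> \<xi> (proj_plus J v) + \<xi> (proj_minus J v) = \<xi> v"
  by (metis linear_add proj_plus_add_proj_minus)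

lemma linear_proj_plus: "linear J \<Longrightarrow> linear (proj_plus J)"
  by (intro linearI) (simp_all add: proj_plus_def linear_add linear_scale algebra_simps)

lemma linear_proj_minus: "linear J \<Longrightarrow> linear (proj_minus J)"
  by (intro linearI) (simp_all add: proj_minus_def linear_diff linear_add linear_scale algebra_simps)

lemma proj_plus_eq_0: "v \<in> minus_eig J \<Longrightarrow> proj_plus J v = 0"
  by (simp add: proj_plus_def minus_eig_def)

lemma proj_minus_eq_0: "v \<in> plus_eig J \<Longrightarrow> proj_minus J v = 0"
  by (simp add: proj_minus_def plus_eig_def)

context
  fixes J :: "'a::real_vector \<Rightarrow> 'a"
  assumes linear_J: "linear J" and J_J: "\<And>v. J (J v) = v"
begin

lemma proj_plus_in_plus_eig: "proj_plus J v \<in> plus_eig J"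
  using linear_J by (simp add: plus_eig_def proj_plus_def linear_add linear_scale J_J add.commute)

lemma proj_minus_in_minus_eig: "proj_minus J v \<in> minus_eig J"
  using linear_J by (simp add: minus_eig_def proj_minus_def linear_diff linear_scale J_J algebra_simps)

lemma internal_direct_sum_eig: "internal_direct_sum UNIV (plus_eig J) (minus_eig J)"
proof (rule internal_direct_sumI)
  show "0 \<in> plus_eig J" "0 \<in> minus_eig J"
    using linear_0[OF linear_J] by (simp_all add: plus_eig_def minus_eig_def)
  show "x - y \<in> plus_eig J" if "x \<in> plus_eig J" "y \<in> plus_eig J" for x y
    using that linear_diff[OF linear_J] by (simp add: plus_eig_def)
  show "x - y \<in> minus_eig J" if "x \<in> minus_eig J" "y \<in> minus_eig J" for x y
    using that linear_diff[OF linear_J] by (simp add: minus_eig_def)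
  show "plus_eig J \<inter> minus_eig J \<subseteq> {0}"
    by (auto simp: plus_eig_def minus_eig_def eq_neg_iff_add_eq_0 simp flip: scaleR_2)
  have "v \<in> {x1 + x2 |x1 x2. x1 \<in> plus_eig J \<and> x2 \<in> minus_eig J}" for v
    using proj_plus_add_proj_minus[of J v] proj_plus_in_plus_eig[of v] proj_minus_in_minus_eig[of v]
    by (intro CollectI exI[of _ "proj_plus J v"] exI[of _ "proj_minus J v"]) simp
  then show "UNIV = {x1 + x2 |x1 x2. x1 \<in> plus_eig J \<and> x2 \<in> minus_eig J}" by blast
qed

lemma T01_apply_involution:
  assumes "\<xi> \<in> T01 J"
  shows "\<xi> (J v) = - \<xi> v"
proof -
  have "v + J v \<in> plus_eig J" using linear_J by (simp add: plus_eig_def linear_add J_J)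
  then have "\<xi> (v + J v) = 0" using assms by (simp add: T01_def)
  then show ?thesis using assms by (simp add: T01_def linear_add eq_neg_iff_add_eq_0 add.commute)
qed

lemma T10_apply_involution:
  assumes "\<xi> \<in> T10 J"
  shows "\<xi> (J v) = \<xi> v"
proof -
  have "v - J v \<in> minus_eig J" using linear_J by (simp add: minus_eig_def linear_diff J_J)
  then have "\<xi> (v - J v) = 0" using assms by (simp add: T10_def)
  then show ?thesis using assms by (simp add: T10_def linear_diff)
qed

lemma T01_apply_proj_minus:
  assumes "\<xi> \<in> T01 J"
  shows "\<xi> (proj_minus J v) = \<xi> v"
proof -
  have "\<xi> (proj_plus J v) + \<xi> (proj_minus J v) = \<xi> v"
    using assms by (simp add: T01_def linear_proj_split)
  then show ?thesis using assms proj_plus_in_plus_eig by (simp add: T01_def)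
qed

lemma T10_apply_proj_plus:
  assumes "\<xi> \<in> T10 J"
  shows "\<xi> (proj_plus J v) = \<xi> v"
proof -
  have "\<xi> (proj_plus J v) + \<xi> (proj_minus J v) = \<xi> v"
    using assms by (simp add: T10_def linear_proj_split)
  then show ?thesis using assms proj_minus_in_minus_eig by (simp add: T10_def)
qed

lemma internal_direct_sum_cotangent: "internal_direct_sum cotangent (T01 J) (T10 J)"
proof (rule internal_direct_sumI)
  show "0 \<in> T01 J" "0 \<in> T10 J" by (simp_all add: T01_def T10_def zero_fun_def linear_zero)
  show "\<xi> - \<eta> \<in> T01 J" if "\<xi> \<in> T01 J" "\<eta> \<in> T01 J" for \<xi> \<eta>
    using that by (simp add: T01_def fun_diff_def linear_compose_sub)
  show "\<xi> - \<eta> \<in> T10 J" if "\<xi> \<in> T10 J" "\<eta> \<in> T10 J" for \<xi> \<eta>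
    using that by (simp add: T10_def fun_diff_def linear_compose_sub)
  show "T01 J \<inter> T10 J \<subseteq> {0}"
  proof
    fix \<xi> assume \<xi>: "\<xi> \<in> T01 J \<inter> T10 J"
    have "\<xi> v = 0" for v
      using T01_apply_proj_minus[of \<xi> v] \<xi> proj_minus_in_minus_eig[of v] by (simp add: T10_def)
    then show "\<xi> \<in> {0}" by (simp add: fun_eq_iff)
  qed
  have decompose: "\<xi> \<in> {\<xi>1 + \<xi>2 |\<xi>1 \<xi>2. \<xi>1 \<in> T01 J \<and> \<xi>2 \<in> T10 J}"
    if "linear \<xi>" for \<xi>
  proof (intro CollectI exI conjI)
    show "\<xi> = (\<lambda>v. \<xi> (proj_minus J v)) + (\<lambda>v. \<xi> (proj_plus J v))"
      using linear_proj_split[OF that] by (simp add: fun_eq_iff add.commute)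
    show "(\<lambda>v. \<xi> (proj_minus J v)) \<in> T01 J"
      using that linear_compose[OF linear_proj_minus[OF linear_J] that] linear_0[OF that]
      by (simp add: T01_def o_def proj_minus_eq_0)
    show "(\<lambda>v. \<xi> (proj_plus J v)) \<in> T10 J"
      using that linear_compose[OF linear_proj_plus[OF linear_J] that] linear_0[OF that]
      by (simp add: T10_def o_def proj_plus_eq_0)
  qed
  show "cotangent = {\<xi>1 + \<xi>2 |\<xi>1 \<xi>2. \<xi>1 \<in> T01 J \<and> \<xi>2 \<in> T10 J}"
  proof (intro equalityI subsetI)
    fix \<xi> :: "'a \<Rightarrow> real" assume "\<xi> \<in> cotangent"
    then show "\<xi> \<in> {\<xi>1 + \<xi>2 |\<xi>1 \<xi>2. \<xi>1 \<in> T01 J \<and> \<xi>2 \<in> T10 J}"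
      using decompose by (simp add: cotangent_def)
  next
    fix \<xi> assume "\<xi> \<in> {\<xi>1 + \<xi>2 |\<xi>1 \<xi>2. \<xi>1 \<in> T01 J \<and> \<xi>2 \<in> T10 J}"
    then obtain \<xi>1 \<xi>2 where "\<xi> = \<xi>1 + \<xi>2" "\<xi>1 \<in> T01 J" "\<xi>2 \<in> T10 J" by blast
    then show "\<xi> \<in> cotangent"
      using linear_compose_add[of \<xi>1 \<xi>2] by (simp add: cotangent_def T01_def T10_def plus_fun_def)
  qed
qed

end

lemma sym_nondeg_bilinear: "sym_nondeg B \<Longrightarrow> bilinear B"
  by (simp add: sym_nondeg_def)

lemma sym_nondeg_eqI:
  assumes "sym_nondeg B" "\<And>e. B x e = B y e"
  shows "x = y"
proof -
  have "B (x - y) e = 0" for e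
    using assms(2) by (simp add: bilinear_lsub[OF sym_nondeg_bilinear[OF assms(1)]])
  then have "x - y = 0" using assms(1) unfolding sym_nondeg_def by blast
  then show ?thesis by simp
qed

lemma sym_nondeg_represents_linear:
  fixes B :: "'e::euclidean_space \<Rightarrow> 'e \<Rightarrow> real"
  assumes B: "sym_nondeg B" and f: "linear f"
  shows "\<exists>x. \<forall>e. B x e = f e"
proof -
  have bil: "bilinear B" by (rule sym_nondeg_bilinear[OF B])
  then have lin: "linear (B x)" for x by (simp add: bilinear_def)
  \<comment> \<open>L x represents the functional B x via the inner product; nondegeneracy makes L
    injective, hence surjective, so the vector representing f is some L x.\<close>
  define L where "L x = adjoint (B x) 1" for x
  have B_L: "B x e = e \<bullet> L x" for x e
    using adjoint_works[OF lin[of x], of e 1] by (simp add: L_def)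
  have "linear L"
  proof (rule linearI)
    show "L (x + y) = L x + L y" for x y
      by (rule vector_eq_ldot[THEN iffD1])
        (simp add: B_L[symmetric] inner_add_right bilinear_ladd[OF bil])
    show "L (c *\<^sub>R x) = c *\<^sub>R L x" for c x
      by (rule vector_eq_ldot[THEN iffD1]) (simp add: B_L[symmetric] bilinear_lmul[OF bil])
  qed
  moreover have "inj L"
    by (rule injI) (metis B_L sym_nondeg_eqI[OF B])
  ultimately obtain x where "L x = adjoint f 1"
    by (metis linear_injective_imp_surjective surjD)
  then have "B x e = f e" for e
    using B_L adjoint_works[OF f, of e 1] by simp
  then show ?thesis by blast
qed

lemma B_dual_eq:
  fixes B :: "'e::euclidean_space \<Rightarrow> 'e \<Rightarrow> real"
  assumes "sym_nondeg B" "linear f"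
  shows "B (B_dual B f) e = f e"
proof -
  obtain x where x: "\<forall>e. B x e = f e"
    using sym_nondeg_represents_linear[OF assms] by blast
  have "\<forall>e. B (B_dual B f) e = f e"
    unfolding B_dual_def by (rule theI[of _ x]) (use x sym_nondeg_eqI[OF assms(1)] in auto)
  then show ?thesis by blast
qed

lemma rho_star_eq:
  fixes B :: "'e::euclidean_space \<Rightarrow> 'e \<Rightarrow> real"
  assumes "sym_nondeg B" "linear \<rho>" "linear \<xi>"
  shows "B (rho_star B \<rho> \<xi>) e = \<xi> (\<rho> e)"
  unfolding rho_star_def
  by (rule B_dual_eq[OF assms(1)]) (use linear_compose[OF assms(2,3)] in \<open>simp add: o_def\<close>)

lemma rho_star_add:
  fixes B :: "'e::euclidean_space \<Rightarrow> 'e \<Rightarrow> real"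
  assumes B: "sym_nondeg B" and "linear \<rho>" "linear \<xi>" "linear \<eta>"
  shows "rho_star B \<rho> (\<xi> + \<eta>) = rho_star B \<rho> \<xi> + rho_star B \<rho> \<eta>"
proof (rule sym_nondeg_eqI[OF B])
  have "linear (\<xi> + \<eta>)"
    using linear_compose_add[OF assms(3,4)] by (simp add: plus_fun_def)
  then show "B (rho_star B \<rho> (\<xi> + \<eta>)) e = B (rho_star B \<rho> \<xi> + rho_star B \<rho> \<eta>) e" for e
    using assms by (simp add: rho_star_eq bilinear_ladd[OF sym_nondeg_bilinear[OF B]])
qed

locale compatible_anchor =
  fixes B :: "'e::euclidean_space \<Rightarrow> 'e \<Rightarrow> real" and \<rho> :: "'e \<Rightarrow> 't::real_vector"
    and J :: "'e \<Rightarrow> 'e" and JT :: "'t \<Rightarrow> 't"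
  assumes sym_nondeg_B: "sym_nondeg B" and anti_compatible_B_J: "anti_compatible B J"
    and linear_\<rho>: "linear \<rho>" and linear_J: "linear J" and J_J: "J (J e) = e"
    and linear_JT: "linear JT" and JT_JT: "JT (JT v) = v"
    and \<rho>_J: "\<rho> (J e) = JT (\<rho> e)"
begin

lemma B_J_left: "B (J x) e = - B x (J e)"
  using anti_compatible_B_J J_J unfolding anti_compatible_def by metis

lemma \<rho>_plus_eig: "e \<in> plus_eig J \<Longrightarrow> \<rho> e \<in> plus_eig JT"
  by (simp add: plus_eig_def flip: \<rho>_J)

lemma \<rho>_minus_eig: "e \<in> minus_eig J \<Longrightarrow> \<rho> e \<in> minus_eig JT"
  by (simp add: minus_eig_def linear_neg[OF linear_\<rho>] flip: \<rho>_J)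

lemma \<rho>_proj_plus: "\<rho> (proj_plus J e) = proj_plus JT (\<rho> e)"
  by (simp add: proj_plus_def linear_add[OF linear_\<rho>] linear_scale[OF linear_\<rho>] \<rho>_J)

lemma \<rho>_proj_minus: "\<rho> (proj_minus J e) = proj_minus JT (\<rho> e)"
  by (simp add: proj_minus_def linear_diff[OF linear_\<rho>] linear_scale[OF linear_\<rho>] \<rho>_J)

lemma rho_star_T01_in_plus_eig:
  assumes "\<xi> \<in> T01 JT"
  shows "rho_star B \<rho> \<xi> \<in> plus_eig J"
proof -
  have lin: "linear \<xi>" using assms by (simp add: T01_def)
  have "B (J (rho_star B \<rho> \<xi>)) e = B (rho_star B \<rho> \<xi>) e" for e
    using T01_apply_involution[OF linear_JT JT_JT assms]
    by (simp add: B_J_left rho_star_eq[OF sym_nondeg_B linear_\<rho> lin] \<rho>_J)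
  then show ?thesis unfolding plus_eig_def using sym_nondeg_eqI[OF sym_nondeg_B] by blast
qed

lemma rho_star_T10_in_minus_eig:
  assumes "\<xi> \<in> T10 JT"
  shows "rho_star B \<rho> \<xi> \<in> minus_eig J"
proof -
  have lin: "linear \<xi>" using assms by (simp add: T10_def)
  have "B (J (rho_star B \<rho> \<xi>)) e = B (- rho_star B \<rho> \<xi>) e" for e
    using T10_apply_involution[OF linear_JT JT_JT assms]
    by (simp add: B_J_left rho_star_eq[OF sym_nondeg_B linear_\<rho> lin] \<rho>_J
        bilinear_lneg[OF sym_nondeg_bilinear[OF sym_nondeg_B]])
  then show ?thesis unfolding minus_eig_def using sym_nondeg_eqI[OF sym_nondeg_B] by blast
qed

lemma a_minus_star_eq_rho_star:
  assumes "\<xi> \<in> T01 JT"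
  shows "a_minus_star B \<rho> J \<xi> = rho_star B \<rho> \<xi>"
  using T01_apply_proj_minus[OF linear_JT JT_JT assms]
  by (simp add: a_minus_star_def rho_star_def \<rho>_proj_minus)

lemma a_plus_star_eq_rho_star:
  assumes "\<xi> \<in> T10 JT"
  shows "a_plus_star B \<rho> J \<xi> = rho_star B \<rho> \<xi>"
  using T10_apply_proj_plus[OF linear_JT JT_JT assms]
  by (simp add: a_plus_star_def rho_star_def \<rho>_proj_plus)

lemma direct_sum_of_sequences_anchor:
  "direct_sum_of_sequences (rho_star B \<rho>) \<rho> cotangent (T01 JT) (T10 JT)
     UNIV (plus_eig J) (minus_eig J) UNIV (plus_eig JT) (minus_eig JT)"
proof
  show "internal_direct_sum cotangent (T01 JT) (T10 JT)"
    by (rule internal_direct_sum_cotangent[OF linear_JT JT_JT])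
  show "internal_direct_sum UNIV (plus_eig J) (minus_eig J)"
    by (rule internal_direct_sum_eig[OF linear_J J_J])
  show "internal_direct_sum UNIV (plus_eig JT) (minus_eig JT)"
    by (rule internal_direct_sum_eig[OF linear_JT JT_JT])
  show "rho_star B \<rho> (\<xi> + \<eta>) = rho_star B \<rho> \<xi> + rho_star B \<rho> \<eta>"
    if "\<xi> \<in> T01 JT" "\<eta> \<in> T10 JT" for \<xi> \<eta>
    using that by (simp add: T01_def T10_def rho_star_add sym_nondeg_B linear_\<rho>)
  show "\<rho> (x + y) = \<rho> x + \<rho> y" for x y
    by (rule linear_add[OF linear_\<rho>])
  show "rho_star B \<rho> ` T01 JT \<subseteq> plus_eig J"
    by (rule image_subsetI, rule rho_star_T01_in_plus_eig)
  show "rho_star B \<rho> ` T10 JT \<subseteq> minus_eig J"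
    by (rule image_subsetI, rule rho_star_T10_in_minus_eig)
  show "\<rho> ` plus_eig J \<subseteq> plus_eig JT" by (rule image_subsetI, rule \<rho>_plus_eig)
  show "\<rho> ` minus_eig J \<subseteq> minus_eig JT" by (rule image_subsetI, rule \<rho>_minus_eig)
qed

theorem short_exact_iff_eigen_sequences:
  "short_exact cotangent (rho_star B \<rho>) UNIV \<rho> UNIV \<longleftrightarrow>
     short_exact (T01 JT) (a_minus_star B \<rho> J) (plus_eig J) \<rho> (plus_eig JT) \<and>
     short_exact (T10 JT) (a_plus_star B \<rho> J) (minus_eig J) \<rho> (minus_eig JT)"
proof -
  have "short_exact (T01 JT) (rho_star B \<rho>) (plus_eig J) \<rho> (plus_eig JT) \<longleftrightarrow>
      short_exact (T01 JT) (a_minus_star B \<rho> J) (plus_eig J) \<rho> (plus_eig JT)"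
    by (rule short_exact_cong) (simp add: a_minus_star_eq_rho_star)
  moreover have "short_exact (T10 JT) (rho_star B \<rho>) (minus_eig J) \<rho> (minus_eig JT) \<longleftrightarrow>
      short_exact (T10 JT) (a_plus_star B \<rho> J) (minus_eig J) \<rho> (minus_eig JT)"
    by (rule short_exact_cong) (simp add: a_plus_star_eq_rho_star)
  ultimately show ?thesis
    using direct_sum_of_sequences.short_exact_iff[OF direct_sum_of_sequences_anchor] by simp
qed

end

lemma para_holomorphic_fibre_compatible_anchor:
  "para_holomorphic_fibre B \<rho> J g JT \<Longrightarrow> compatible_anchor B \<rho> J JT"
  unfolding para_holomorphic_fibre_def para_complex_def compatible_anchor_def by blast

theorem mainTheorem9:
  fixes M :: "'p set"
    and B :: "'p \<Rightarrow> 'e::euclidean_space \<Rightarrow> 'e \<Rightarrow> real"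
    and \<rho> :: "'p \<Rightarrow> 'e \<Rightarrow> 't::euclidean_space"
    and J :: "'p \<Rightarrow> 'e \<Rightarrow> 'e"
    and g :: "'p \<Rightarrow> 't \<Rightarrow> 't \<Rightarrow> real"
    and JT :: "'p \<Rightarrow> 't \<Rightarrow> 't"
  assumes "\<forall>p\<in>M. para_holomorphic_fibre (B p) (\<rho> p) (J p) (g p) (JT p)"
  shows "(\<forall>p\<in>M. short_exact cotangent (rho_star (B p) (\<rho> p)) UNIV (\<rho> p) UNIV)
     \<longleftrightarrow> (\<forall>p\<in>M.
           short_exact (T01 (JT p)) (a_minus_star (B p) (\<rho> p) (J p)) (plus_eig (J p))
                       (\<rho> p) (plus_eig (JT p))
         \<and> short_exact (T10 (JT p)) (a_plus_star (B p) (\<rho> p) (J p)) (minus_eig (J p))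
                       (\<rho> p) (minus_eig (JT p)))"
proof -
  have "compatible_anchor (B p) (\<rho> p) (J p) (JT p)" if "p \<in> M" for p
    using assms that by (blast intro: para_holomorphic_fibre_compatible_anchor)
  then show ?thesis
    by (intro ball_cong[OF refl] compatible_anchor.short_exact_iff_eigen_sequences) blast
qed

end
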